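(* Let $G$ be a group, $n$ a positive integer, and let $\alpha_i:H_i\to H_i'$ for $i=1,\dots,r$ be isomorphisms between finite-index subgroups of $G$ such that the subindices of $H_i$ and of $H_i'$ in $G$ are at most $n$ for all $i$. Then every finite product of the classes $[\alpha_i]$ (and their inverses) in $\mathrm{Comm}(G)$ can be represented by an isomorphism $\beta:H\to H'$ where $H,H'$ are finite-index subgroups of $G$ whose subindices in $G$ are at most $n$.
   Context: For a finite-index subgroup $H\leqslant G$, the subindex of $H$ in $G$ is the minimal $n$ such that there is a chain of subgroups $H=G_0\leqslant G_1\leqslant\cdots\leqslant G_k=G$ with $[G_i:G_{i-1}]\le n$ for all $i$. The abstract commensurator $\mathrm{Comm}(G)$ is the group of equivalence classes $[\varphi]$ of isomorphisms between finite-index subgroups of $G$, two being equivalent if they agree on some finite-index subgroup on which both are defined; the product of $\alpha:G_1\to G_1'$ and $\beta:G_2\to G_2'$ is $\alpha\beta:\alpha^{-1}(G_1'\cap G_2)\to\beta(G_1'\cap G_2)$, and the inverse of $[\alpha]$ is $[\alpha^{-1}]$. *)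

theory Defs
  imports "HOL-Algebra.Algebra"
begin

definition rel_index :: "('a, 'b) monoid_scheme \<Rightarrow> 'a set \<Rightarrow> 'a set \<Rightarrow> nat" where
  "rel_index G H K = card (rcosets\<^bsub>G\<lparr>carrier := K\<rparr>\<^esub> H)"

definition fin_index_in :: "('a, 'b) monoid_scheme \<Rightarrow> 'a set \<Rightarrow> 'a set \<Rightarrow> bool" where
  "fin_index_in G H K \<longleftrightarrow> subgroup H G \<and> subgroup K G \<and> H \<subseteq> K
      \<and> finite (rcosets\<^bsub>G\<lparr>carrier := K\<rparr>\<^esub> H)"

definition fi_subgroup :: "('a, 'b) monoid_scheme \<Rightarrow> 'a set \<Rightarrow> bool" where
  "fi_subgroup G H \<longleftrightarrow> fin_index_in G H (carrier G)"

definition index_chain :: "('a, 'b) monoid_scheme \<Rightarrow> 'a set \<Rightarrow> nat \<Rightarrow> 'a set list \<Rightarrow> bool" where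
  "index_chain G H m Ks \<longleftrightarrow> Ks \<noteq> [] \<and> hd Ks = H \<and> last Ks = carrier G
      \<and> (\<forall>K\<in>set Ks. subgroup K G)
      \<and> (\<forall>i. Suc i < length Ks \<longrightarrow>
            fin_index_in G (Ks ! i) (Ks ! Suc i) \<and> rel_index G (Ks ! i) (Ks ! Suc i) \<le> m)"

definition subindex :: "('a, 'b) monoid_scheme \<Rightarrow> 'a set \<Rightarrow> nat" where
  "subindex G H = (LEAST m. \<exists>Ks. index_chain G H m Ks)"

text \<open>Partial isomorphisms: (domain, codomain, map), an isomorphism between finite-index subgroups.\<close>
type_synonym 'a piso = "'a set \<times> 'a set \<times> ('a \<Rightarrow> 'a)"

definition is_piso :: "('a, 'b) monoid_scheme \<Rightarrow> 'a piso \<Rightarrow> bool" where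
  "is_piso G p \<longleftrightarrow> (case p of (H, H', f) \<Rightarrow>
      fi_subgroup G H \<and> fi_subgroup G H' \<and> f \<in> iso (G\<lparr>carrier := H\<rparr>) (G\<lparr>carrier := H'\<rparr>))"

text \<open>Product alpha beta : alpha^{-1}(G1' \<inter> G2) \<rightarrow> beta(G1' \<inter> G2) (first alpha, then beta).\<close>
definition piso_mult :: "'a piso \<Rightarrow> 'a piso \<Rightarrow> 'a piso" where
  "piso_mult p q = (case p of (H1, H1', a) \<Rightarrow> case q of (H2, H2', b) \<Rightarrow>
      ({x \<in> H1. a x \<in> H2}, b ` (H1' \<inter> H2), b \<circ> a))"

definition piso_inv :: "'a piso \<Rightarrow> 'a piso" where
  "piso_inv p = (case p of (H, H', a) \<Rightarrow> (H', H, inv_into H a))"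

definition piso_one :: "('a, 'b) monoid_scheme \<Rightarrow> 'a piso" where
  "piso_one G = (carrier G, carrier G, id)"

definition comm_equiv :: "('a, 'b) monoid_scheme \<Rightarrow> 'a piso \<Rightarrow> 'a piso \<Rightarrow> bool" where
  "comm_equiv G p q \<longleftrightarrow> (case p of (A, A', f) \<Rightarrow> case q of (B, B', g) \<Rightarrow>
      (\<exists>K. fi_subgroup G K \<and> K \<subseteq> A \<and> K \<subseteq> B \<and> (\<forall>x\<in>K. f x = g x)))"

text \<open>Product of a word in the generators: (i, False) stands for [alpha_i], (i, True) for [alpha_i]^{-1}.\<close>
definition word_prod :: "('a, 'b) monoid_scheme \<Rightarrow> (nat \<Rightarrow> 'a piso) \<Rightarrow> (nat \<times> bool) list \<Rightarrow> 'a piso" where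
  "word_prod G gen w = foldl piso_mult (piso_one G)
      (map (\<lambda>(i, e). if e then piso_inv (gen i) else gen i) w)"

end

theory Submission
  imports Defs
begin

text \<open>Call a partial isomorphism bounded when its domain and its codomain both reach G through a
chain of subgroups whose successive indices are at most n. Intersecting such a chain with a
subgroup M, or transporting a chain inside M through an isomorphism defined on M, does not increase
any index. The domain of a product is the preimage under the first factor of H1' \<inter> H2: intersect
the chain of H2 with H1', transport it back to a chain ending in H1, and continue with the chain
of H1; the codomain is symmetric. Hence bounded partial isomorphisms are closed under products and
inverses, and the product of the word itself is the required representative.\<close>

lemma successively_iff_nth:
  "successively P xs \<longleftrightarrow> (\<forall>i. Suc i < length xs \<longrightarrow> P (xs ! i) (xs ! Suc i))"
proof (induction P xs rule: successively.induct)
  case (3 P x y xs)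
  then show ?case by (simp add: All_less_Suc2)
qed simp_all

lemma (in group) rcos_eq_iff_mult_inv:
  assumes "subgroup K G" "x \<in> carrier G" "y \<in> carrier G"
  shows "K #> x = K #> y \<longleftrightarrow> x \<otimes> inv y \<in> K"
  using assms coset_mult_inv1 coset_mult_inv2 coset_join1 coset_join2 subgroup.subset
  by (metis inv_closed m_closed)

lemma image_eq_image_inv_into:
  assumes "\<And>x y. x \<in> S \<Longrightarrow> y \<in> S \<Longrightarrow> g x = g y \<Longrightarrow> f x = f y"
  shows "f ` S = (f \<circ> inv_into S g) ` (g ` S)"
proof -
  have "f (inv_into S g (g x)) = f x" if "x \<in> S" for x
    using that by (intro assms inv_into_into f_inv_into_f) (auto intro: imageI)
  then show ?thesis by (simp add: image_image)
qed

lemma iso_subgroup_restrict: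
  assumes "f \<in> iso (G\<lparr>carrier := H\<rparr>) (G\<lparr>carrier := H'\<rparr>)" "K \<subseteq> H"
  shows "f \<in> iso (G\<lparr>carrier := K\<rparr>) (G\<lparr>carrier := f ` K\<rparr>)"
  using assms by (auto simp: iso_def hom_def bij_betw_def intro: inj_on_subset)

lemma preimage_eq_inv_into_image:
  assumes "bij_betw f A B"
  shows "{x \<in> A. f x \<in> S} = inv_into A f ` (S \<inter> B)"
  using assms by (auto simp: bij_betw_def image_iff intro!: bexI[of _ "f _"] inv_into_f_f[symmetric])

lemma rcosets_carrier_update: "rcosets\<^bsub>G\<lparr>carrier := L\<rparr>\<^esub> H = (\<lambda>x. H #>\<^bsub>G\<^esub> x) ` L"
  by (auto simp: RCOSETS_def r_coset_def)

lemma (in group) fin_index_in_refl: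
  assumes "subgroup H G"
  shows "fin_index_in G H H"
proof -
  have "(\<lambda>x. H #> x) ` H \<subseteq> {H}"
    using coset_join2[OF _ assms] subgroup.mem_carrier[OF assms] by auto
  then show ?thesis
    using assms by (auto simp: fin_index_in_def rcosets_carrier_update intro: finite_subset)
qed

lemma (in group) fin_index_in_trans:
  assumes "fin_index_in G K L" "fin_index_in G L N"
  shows "fin_index_in G K N"
proof -
  have K: "subgroup K G" and L: "subgroup L G" and N: "subgroup N G"
    and "K \<subseteq> L" "L \<subseteq> N"
    and fin_KL: "finite ((\<lambda>x. K #> x) ` L)" and fin_LN: "finite ((\<lambda>x. L #> x) ` N)"
    using assms by (auto simp: fin_index_in_def rcosets_carrier_update)
  define F where "F = (\<lambda>(C, D). C #> (SOME g. g \<in> D))"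
  have "(\<lambda>x. K #> x) ` N \<subseteq> F ` (((\<lambda>x. K #> x) ` L) \<times> ((\<lambda>x. L #> x) ` N))"
  proof
    fix C assume "C \<in> (\<lambda>x. K #> x) ` N"
    then obtain x where x: "x \<in> N" and C: "C = K #> x" by auto
    have x_carrier: "x \<in> carrier G" using x subgroup.mem_carrier[OF N] by blast
    define g where "g = (SOME g. g \<in> L #> x)"
    have "g \<in> L #> x" unfolding g_def by (rule someI[of _ x]) (rule rcos_self[OF x_carrier L])
    then obtain l where l: "l \<in> L" and g: "g = l \<otimes> x" by (auto simp: r_coset_def)
    have l_carrier: "l \<in> carrier G" using l subgroup.mem_carrier[OF L] by blast
    \<comment> \<open>a K-coset of N is a K-coset of L translated by the chosen representative of an L-coset\<close>
    have "(K #> inv l) #> g = K #> (inv l \<otimes> g)"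
      using coset_mult_assoc subgroup.subset[OF K] l_carrier x_carrier g by simp
    also have "inv l \<otimes> g = x" using g l_carrier x_carrier by (simp add: m_assoc[symmetric])
    finally have "C = F (K #> inv l, L #> x)" unfolding F_def g_def C by simp
    moreover have "K #> inv l \<in> (\<lambda>x. K #> x) ` L" using l subgroup.m_inv_closed[OF L] by blast
    ultimately show "C \<in> F ` (((\<lambda>x. K #> x) ` L) \<times> ((\<lambda>x. L #> x) ` N))" using x by blast
  qed
  then have "finite ((\<lambda>x. K #> x) ` N)"
    by (rule finite_subset) (use fin_KL fin_LN in blast)
  then show ?thesis
    using K N \<open>K \<subseteq> L\<close> \<open>L \<subseteq> N\<close> by (auto simp: fin_index_in_def rcosets_carrier_update)
qed

lemma (in group) fin_index_in_Int:
  assumes "fin_index_in G K L" "subgroup M G"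
  shows "fin_index_in G (K \<inter> M) (L \<inter> M) \<and> rel_index G (K \<inter> M) (L \<inter> M) \<le> rel_index G K L"
proof -
  have K: "subgroup K G" and L: "subgroup L G" and "K \<subseteq> L"
    and fin: "finite ((\<lambda>x. K #> x) ` L)"
    using assms(1) by (auto simp: fin_index_in_def rcosets_carrier_update)
  have KM: "subgroup (K \<inter> M) G" using K assms(2) by (rule subgroups_Inter_pair)
  have "(K \<inter> M) #> x = (K \<inter> M) #> y"
    if "x \<in> L \<inter> M" "y \<in> L \<inter> M" "K #> x = K #> y" for x y
  proof -
    have "x \<in> carrier G" "y \<in> carrier G" using that subgroup.mem_carrier[OF L] by auto
    with that show ?thesis using K KM assms(2)
      by (simp add: rcos_eq_iff_mult_inv subgroup.m_closed subgroup.m_inv_closed)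
  qed
  then have eq: "(\<lambda>x. (K \<inter> M) #> x) ` (L \<inter> M)
      = ((\<lambda>x. (K \<inter> M) #> x) \<circ> inv_into (L \<inter> M) (\<lambda>x. K #> x)) ` ((\<lambda>x. K #> x) ` (L \<inter> M))"
    by (rule image_eq_image_inv_into)
  have fin': "finite ((\<lambda>x. K #> x) ` (L \<inter> M))" using fin by (rule finite_subset[rotated]) blast
  have "card ((\<lambda>x. (K \<inter> M) #> x) ` (L \<inter> M)) \<le> card ((\<lambda>x. K #> x) ` (L \<inter> M))"
    unfolding eq by (rule card_image_le[OF fin'])
  also have "\<dots> \<le> card ((\<lambda>x. K #> x) ` L)" using fin by (rule card_mono) blast
  finally show ?thesis
    using KM L assms(2) \<open>K \<subseteq> L\<close> fin' eq
    by (auto simp: fin_index_in_def rel_index_def rcosets_carrier_update subgroups_Inter_pair)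
qed

lemma (in group) iso_image_subgroup:
  assumes "subgroup H G" "subgroup H' G"
    and f: "f \<in> iso (G\<lparr>carrier := H\<rparr>) (G\<lparr>carrier := H'\<rparr>)"
    and "subgroup K G" "K \<subseteq> H"
  shows "subgroup (f ` K) G"
proof -
  have "group_hom (G\<lparr>carrier := H\<rparr>) (G\<lparr>carrier := H'\<rparr>) f"
    using assms by (simp add: group_hom_def group_hom_axioms_def subgroup_imp_group iso_imp_homomorphism)
  moreover have "subgroup K (G\<lparr>carrier := H\<rparr>)" using assms by (simp add: subgroup_incl)
  ultimately have "subgroup (f ` K) (G\<lparr>carrier := H'\<rparr>)" by (rule group_hom.subgroup_img_is_subgroup)
  with assms(2) show ?thesis by (rule incl_subgroup)
qed

lemma iso_image_rcos:
  assumes "f \<in> iso (G\<lparr>carrier := H\<rparr>) (G\<lparr>carrier := H'\<rparr>)" "x \<in> H" "K \<subseteq> H"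
  shows "f ` (K #>\<^bsub>G\<^esub> x) = (f ` K) #>\<^bsub>G\<^esub> f x"
proof -
  have "f (k \<otimes>\<^bsub>G\<^esub> x) = f k \<otimes>\<^bsub>G\<^esub> f x" if "k \<in> K" for k
    using assms that by (auto simp: iso_def hom_def)
  then show ?thesis by (force simp: r_coset_def image_iff)
qed

lemma (in group) fin_index_in_iso_image:
  assumes "subgroup H G" "subgroup H' G"
    and f: "f \<in> iso (G\<lparr>carrier := H\<rparr>) (G\<lparr>carrier := H'\<rparr>)"
    and KL: "fin_index_in G K L" and "L \<subseteq> H"
  shows "fin_index_in G (f ` K) (f ` L) \<and> rel_index G (f ` K) (f ` L) \<le> rel_index G K L"
proof -
  have "subgroup K G" "subgroup L G" "K \<subseteq> L" and fin: "finite ((\<lambda>x. K #> x) ` L)"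
    using KL by (auto simp: fin_index_in_def rcosets_carrier_update)
  have "(\<lambda>y. (f ` K) #> y) ` (f ` L) = (\<lambda>x. (f ` K) #> f x) ` L" by (simp add: image_image)
  also have "\<dots> = (\<lambda>x. f ` (K #> x)) ` L"
    using \<open>K \<subseteq> L\<close> \<open>L \<subseteq> H\<close> by (intro image_cong refl iso_image_rcos[OF f, symmetric]) auto
  also have "\<dots> = image f ` ((\<lambda>x. K #> x) ` L)" by (simp add: image_image)
  finally show ?thesis
    using assms iso_image_subgroup \<open>subgroup K G\<close> \<open>subgroup L G\<close> \<open>K \<subseteq> L\<close> fin
      card_image_le[OF fin, of "image f"]
    by (auto simp: fin_index_in_def rel_index_def rcosets_carrier_update)
qed

inductive bounded_chain :: "('a, 'b) monoid_scheme \<Rightarrow> nat \<Rightarrow> 'a set \<Rightarrow> 'a set \<Rightarrow> bool"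
  for G m where
  refl: "subgroup H G \<Longrightarrow> bounded_chain G m H H"
| step: "fin_index_in G H K \<Longrightarrow> rel_index G H K \<le> m \<Longrightarrow> bounded_chain G m K L
    \<Longrightarrow> bounded_chain G m H L"

lemma bounded_chain_trans:
  "bounded_chain G m H K \<Longrightarrow> bounded_chain G m K L \<Longrightarrow> bounded_chain G m H L"
  by (induction rule: bounded_chain.induct) (auto intro: bounded_chain.step)

lemma bounded_chain_mono: "bounded_chain G m H L \<Longrightarrow> m \<le> n \<Longrightarrow> bounded_chain G n H L"
  by (induction rule: bounded_chain.induct) (auto intro: bounded_chain.intros)

lemma bounded_chain_subgroups: "bounded_chain G m H L \<Longrightarrow> subgroup H G \<and> subgroup L G"
  by (induction rule: bounded_chain.induct) (auto simp: fin_index_in_def)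

lemma bounded_chain_subset: "bounded_chain G m H L \<Longrightarrow> H \<subseteq> L"
  by (induction rule: bounded_chain.induct) (auto simp: fin_index_in_def)

lemma (in group) bounded_chain_imp_fin_index_in: "bounded_chain G m H L \<Longrightarrow> fin_index_in G H L"
  by (induction rule: bounded_chain.induct) (auto intro: fin_index_in_refl fin_index_in_trans)

lemma (in group) bounded_chain_Int:
  "bounded_chain G m K L \<Longrightarrow> subgroup M G \<Longrightarrow> bounded_chain G m (K \<inter> M) (L \<inter> M)"
proof (induction rule: bounded_chain.induct)
  case (refl H)
  then show ?case by (simp add: bounded_chain.refl subgroups_Inter_pair)
next
  case (step H K L)
  then show ?case using fin_index_in_Int[OF step(1)] by (meson bounded_chain.step le_trans)
qed

lemma (in group) bounded_chain_iso_image: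
  assumes "subgroup H G" "subgroup H' G" and f: "f \<in> iso (G\<lparr>carrier := H\<rparr>) (G\<lparr>carrier := H'\<rparr>)"
  shows "bounded_chain G m K L \<Longrightarrow> L \<subseteq> H \<Longrightarrow> bounded_chain G m (f ` K) (f ` L)"
proof (induction rule: bounded_chain.induct)
  case (refl K)
  then show ?case using iso_image_subgroup[OF assms] by (auto intro: bounded_chain.refl)
next
  case (step K K' L)
  then have "K' \<subseteq> H" using bounded_chain_subset by blast
  then show ?case
    using fin_index_in_iso_image[OF assms step(1)] step by (auto intro: bounded_chain.step)
qed

lemma bounded_chain_iff_successively:
  "bounded_chain G m H L \<longleftrightarrow> (\<exists>Ks. Ks \<noteq> [] \<and> hd Ks = H \<and> last Ks = L
      \<and> (\<forall>K\<in>set Ks. subgroup K G)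
      \<and> successively (\<lambda>K K'. fin_index_in G K K' \<and> rel_index G K K' \<le> m) Ks)"
  (is "_ \<longleftrightarrow> (\<exists>Ks. ?chain H L Ks)")
proof
  assume "bounded_chain G m H L"
  then show "\<exists>Ks. ?chain H L Ks"
  proof (induction rule: bounded_chain.induct)
    case (refl H)
    then show ?case by (intro exI[of _ "[H]"]) simp
  next
    case (step H K L)
    then obtain Ks where "?chain K L Ks" by blast
    with step show ?case
      by (intro exI[of _ "H # Ks"]) (auto simp: successively_Cons fin_index_in_def)
  qed
next
  assume "\<exists>Ks. ?chain H L Ks"
  then obtain Ks where "?chain H L Ks" by blast
  then show "bounded_chain G m H L"
  proof (induction Ks arbitrary: H)
    case (Cons K Ks)
    then show ?case
      by (cases Ks) (auto simp: successively_Cons intro: bounded_chain.intros)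
  qed simp
qed

lemma ex_index_chain_iff_bounded_chain:
  "(\<exists>Ks. index_chain G H m Ks) \<longleftrightarrow> bounded_chain G m H (carrier G)"
  by (simp add: index_chain_def bounded_chain_iff_successively successively_iff_nth)

lemma subindex_le_iff_bounded_chain:
  assumes "fi_subgroup G H"
  shows "subindex G H \<le> n \<longleftrightarrow> bounded_chain G n H (carrier G)"
proof
  have fi: "fin_index_in G H (carrier G)" using assms by (simp add: fi_subgroup_def)
  then have "subgroup (carrier G) G" by (simp add: fin_index_in_def)
  with fi have "bounded_chain G (rel_index G H (carrier G)) H (carrier G)"
    by (blast intro: bounded_chain.step bounded_chain.refl)
  then have "\<exists>Ks. index_chain G H (subindex G H) Ks"
    unfolding subindex_def by (rule LeastI[of _ "rel_index G H (carrier G)", OF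
        ex_index_chain_iff_bounded_chain[THEN iffD2]])
  then have "bounded_chain G (subindex G H) H (carrier G)"
    by (simp add: ex_index_chain_iff_bounded_chain)
  moreover assume "subindex G H \<le> n"
  ultimately show "bounded_chain G n H (carrier G)"
    by (rule bounded_chain_mono)
next
  assume "bounded_chain G n H (carrier G)"
  then show "subindex G H \<le> n"
    unfolding subindex_def by (intro Least_le) (simp add: ex_index_chain_iff_bounded_chain)
qed

lemma (in group) bounded_chain_iso_image_Int:
  assumes f: "f \<in> iso (G\<lparr>carrier := H\<rparr>) (G\<lparr>carrier := H'\<rparr>)" and "subgroup H G"
    and H': "bounded_chain G n H' (carrier G)" and K: "bounded_chain G n K (carrier G)"
  shows "bounded_chain G n (f ` (K \<inter> H)) (carrier G)"
proof -
  have "subgroup H' G" using H' bounded_chain_subgroups by blast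
  have "bounded_chain G n (K \<inter> H) H"
    using bounded_chain_Int[OF K \<open>subgroup H G\<close>] subgroup.subset[OF \<open>subgroup H G\<close>]
    by (simp add: Int_absorb1)
  then have "bounded_chain G n (f ` (K \<inter> H)) (f ` H)"
    by (rule bounded_chain_iso_image[OF \<open>subgroup H G\<close> \<open>subgroup H' G\<close> f]) simp
  moreover have "f ` H = H'" using f by (simp add: iso_iff)
  ultimately show ?thesis using H' by (metis bounded_chain_trans)
qed

definition bounded_piso :: "('a, 'b) monoid_scheme \<Rightarrow> nat \<Rightarrow> 'a piso \<Rightarrow> bool" where
  "bounded_piso G n p \<longleftrightarrow> (case p of (H, H', f) \<Rightarrow>
      f \<in> iso (G\<lparr>carrier := H\<rparr>) (G\<lparr>carrier := H'\<rparr>)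
      \<and> bounded_chain G n H (carrier G) \<and> bounded_chain G n H' (carrier G))"

lemma (in group) bounded_piso_iff:
  "bounded_piso G n (H, H', f) \<longleftrightarrow> is_piso G (H, H', f) \<and> subindex G H \<le> n \<and> subindex G H' \<le> n"
proof -
  have "fi_subgroup G K" if "bounded_chain G n K (carrier G)" for K
    using bounded_chain_imp_fin_index_in[OF that] by (simp add: fi_subgroup_def)
  then show ?thesis
    using subindex_le_iff_bounded_chain by (auto simp: bounded_piso_def is_piso_def)
qed

lemma (in group) bounded_piso_one: "bounded_piso G n (piso_one G)"
  by (simp add: bounded_piso_def piso_one_def id_iso bounded_chain.refl subgroup_self)

lemma (in group) bounded_piso_inv: "bounded_piso G n p \<Longrightarrow> bounded_piso G n (piso_inv p)"
  using bounded_chain_subgroups group.iso_set_sym[OF subgroup_imp_group]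
  by (fastforce simp: bounded_piso_def piso_inv_def)

lemma (in group) bounded_piso_mult:
  assumes "bounded_piso G n p" "bounded_piso G n q"
  shows "bounded_piso G n (piso_mult p q)"
proof -
  obtain H1 H1' a where p: "p = (H1, H1', a)" by (cases p)
  obtain H2 H2' b where q: "q = (H2, H2', b)" by (cases q)
  have a: "a \<in> iso (G\<lparr>carrier := H1\<rparr>) (G\<lparr>carrier := H1'\<rparr>)"
    and H1: "bounded_chain G n H1 (carrier G)" and H1': "bounded_chain G n H1' (carrier G)"
    using assms(1) p by (auto simp: bounded_piso_def)
  have b: "b \<in> iso (G\<lparr>carrier := H2\<rparr>) (G\<lparr>carrier := H2'\<rparr>)"
    and H2: "bounded_chain G n H2 (carrier G)" and H2': "bounded_chain G n H2' (carrier G)"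
    using assms(2) q by (auto simp: bounded_piso_def)
  have "subgroup H1 G" "subgroup H1' G" "subgroup H2 G"
    using H1 H1' H2 bounded_chain_subgroups by blast+
  define D where "D = {x \<in> H1. a x \<in> H2}"
  have a_bij: "bij_betw a H1 H1'" using a by (simp add: iso_def)
  have a_inv: "inv_into H1 a \<in> iso (G\<lparr>carrier := H1'\<rparr>) (G\<lparr>carrier := H1\<rparr>)"
    using group.iso_set_sym[OF subgroup_imp_group[OF \<open>subgroup H1 G\<close>] a] by simp
  have "D = inv_into H1 a ` (H2 \<inter> H1')"
    unfolding D_def by (rule preimage_eq_inv_into_image[OF a_bij])
  then have D: "bounded_chain G n D (carrier G)"
    using bounded_chain_iso_image_Int[OF a_inv \<open>subgroup H1' G\<close> H1 H2] by simp
  have E: "bounded_chain G n (b ` (H1' \<inter> H2)) (carrier G)"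
    using bounded_chain_iso_image_Int[OF b \<open>subgroup H2 G\<close> H2' H1'] .
  have "a ` D = H1' \<inter> H2" using a_bij by (auto simp: D_def bij_betw_def)
  then have "a \<in> iso (G\<lparr>carrier := D\<rparr>) (G\<lparr>carrier := H1' \<inter> H2\<rparr>)"
    using iso_subgroup_restrict[OF a, of D] by (simp add: D_def)
  moreover have "b \<in> iso (G\<lparr>carrier := H1' \<inter> H2\<rparr>) (G\<lparr>carrier := b ` (H1' \<inter> H2)\<rparr>)"
    using iso_subgroup_restrict[OF b] by blast
  ultimately have "b \<circ> a \<in> iso (G\<lparr>carrier := D\<rparr>) (G\<lparr>carrier := b ` (H1' \<inter> H2)\<rparr>)"
    by (rule iso_set_trans)
  with D E show ?thesis by (simp add: bounded_piso_def piso_mult_def p q D_def)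
qed

lemma (in group) bounded_piso_foldl_mult:
  "bounded_piso G n p \<Longrightarrow> \<forall>q\<in>set qs. bounded_piso G n q \<Longrightarrow> bounded_piso G n (foldl piso_mult p qs)"
  by (induction qs arbitrary: p) (simp_all add: bounded_piso_mult)

lemma comm_equiv_refl: "is_piso G p \<Longrightarrow> comm_equiv G p p"
  by (auto simp: is_piso_def comm_equiv_def)

theorem lemma2p5:
  fixes G :: "('a, 'b) monoid_scheme" and n r :: nat
    and gen :: "nat \<Rightarrow> 'a piso"
    and w :: "(nat \<times> bool) list"
  assumes "group G" and "0 < n"
    and "\<And>i. i < r \<Longrightarrow> is_piso G (gen i)"
    and "\<And>i. i < r \<Longrightarrow> subindex G (fst (gen i)) \<le> n \<and> subindex G (fst (snd (gen i))) \<le> n"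
    and "\<forall>(i, e) \<in> set w. i < r"
  shows "\<exists>H H' \<beta>. is_piso G (H, H', \<beta>) \<and> subindex G H \<le> n \<and> subindex G H' \<le> n
           \<and> comm_equiv G (H, H', \<beta>) (word_prod G gen w)"
proof -
  interpret group G by fact
  have "bounded_piso G n (gen i)" if "i < r" for i
    using assms(3,4)[OF that] bounded_piso_iff by (cases "gen i") auto
  then have "\<forall>q \<in> set (map (\<lambda>(i, e). if e then piso_inv (gen i) else gen i) w). bounded_piso G n q"
    using assms(5) by (fastforce intro: bounded_piso_inv)
  then have "bounded_piso G n (word_prod G gen w)"
    unfolding word_prod_def by (intro bounded_piso_foldl_mult bounded_piso_one)
  moreover obtain H H' \<beta> where word: "word_prod G gen w = (H, H', \<beta>)"
    by (cases "word_prod G gen w")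
  ultimately have "is_piso G (H, H', \<beta>)" "subindex G H \<le> n" "subindex G H' \<le> n"
    by (simp_all add: bounded_piso_iff)
  then show ?thesis unfolding word using comm_equiv_refl by blast
qed

end
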